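(* Let $A$ and $B$ be automata. (1) If $B$ is deterministic and $A\le_B B$, then $A\le_R B$. (2) If all states of $A$ are reachable, $B$ has finite invisible nondeterminism, and $A\le_B B$, then $A\le_{iB}B$.
   Context: An automaton $A$ consists of a set $\mathrm{states}(A)$ of states, a nonempty set $\mathrm{start}(A)\subseteq\mathrm{states}(A)$ of start states, a set $\mathrm{acts}(A)$ of actions containing a distinguished internal action $\tau$, and a set $\mathrm{steps}(A)\subseteq\mathrm{states}(A)\times\mathrm{acts}(A)\times\mathrm{states}(A)$ of steps; write $s\xrightarrow{a}_A t$ for $(s,a,t)\in\mathrm{steps}(A)$. An execution fragment of $A$ is a finite or infinite alternating sequence $s_0a_1s_1a_2s_2\cdots$ of states and actions, beginning with a state and, if finite, ending with a state, such that $s_{i-1}\xrightarrow{a_i}_A s_i$ for all $i>0$. An execution is an execution fragment whose first state is a start state. A state is reachable if it is the last state of some finite execution. For states $s,t$ and a finite sequence $\beta$ of non-$\tau$ actions, write $s\stackrel{\beta}{\Rightarrow}_A t$ if $A$ has a finite execution fragment starting in $s$, with trace (subsequence of non-$\tau$ actions) $\beta$, ending in $t$. $A$ is deterministic if $|\mathrm{start}(A)|=1$ and for every state $s$ and finite sequence $\beta$ of non-$\tau$ actions there is at most one $t$ with $s\stackrel{\beta}{\Rightarrow}_A t$. $A$ has finite invisible nondeterminism if $\mathrm{start}(A)$ is finite and for every state $s$ and finite sequence $\beta$ of non-$\tau$ actions there are only finitely many $t$ with $s\stackrel{\beta}{\Rightarrow}_A t$. For a relation $R$ write $R[s]=\{u\mid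 (s,u)\in R\}$; $R$ is image-finite if every $R[s]$ is finite. A step refinement from $A$ to $B$ is a partial function $r:\mathrm{states}(A)\rightharpoonup\mathrm{states}(B)$ such that (1) if $s\in\mathrm{start}(A)$ then $s\in\mathrm{dom}(r)$ and $r(s)\in\mathrm{start}(B)$; (2) if $s\xrightarrow{a}_A t$ and $s\in\mathrm{dom}(r)$ then $t\in\mathrm{dom}(r)$ and either $r(s)=r(t)$ and $a=\tau$, or $r(s)\xrightarrow{a}_B r(t)$. Write $A\le_R B$ if one exists. A normed backward simulation from $A$ to $B$ is a pair $(b,n)$ where $b\subseteq\mathrm{states}(A)\times\mathrm{states}(B)$ is total (every $s\in\mathrm{states}(A)$ has $b[s]\neq\emptyset$) and $n:(\mathrm{steps}(A)\cup\mathrm{start}(A))\times\mathrm{states}(B)\to S$ for some set $S$ with a well-founded strict order $<$, such that: (1) if $s\in\mathrm{start}(A)$ and $u\in b[s]$ then (a) $u\in\mathrm{start}(B)$, or (b) there is $v\in b[s]$ with $v\xrightarrow{\tau}_B u$ and $n(s,v)<n(s,u)$; (2) if $t\xrightarrow{a}_A s$ and $u\in b[s]$ then (a) $u\in b[t]$ and $a=\tau$, or (b) there is $v\in b[t]$ with $v\xrightarrow{a}_B u$, or (c) there is $v\in b[s]$ with $v\xrightarrow{\tau}_B u$ and $n(t\xrightarrow{a}s,v)<n(t\xrightarrow{a}s,u)$. Write $A\le_B B$ if one exists and $A\le_{iB}B$ if one exists with $b$ image-finite. *)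

theory Defs
  imports Main
begin

text \<open>Automata. Actions range over a type 'a; the distinguished internal action
  tau is a parameter shared by all automata under consideration.\<close>

record ('s, 'a) automaton =
  states :: "'s set"
  start :: "'s set"
  acts :: "'a set"
  steps :: "('s \<times> 'a \<times> 's) set"

definition is_automaton :: "'a \<Rightarrow> ('s, 'a) automaton \<Rightarrow> bool" where
  "is_automaton tau A \<longleftrightarrow>
     start A \<subseteq> states A \<and> start A \<noteq> {} \<and> tau \<in> acts A \<and>
     steps A \<subseteq> states A \<times> acts A \<times> states A"

text \<open>Finite execution fragment: first state s, followed by the list of (action, state) pairs.\<close>
fun frag_from :: "('s, 'a) automaton \<Rightarrow> 's \<Rightarrow> ('a \<times> 's) list \<Rightarrow> bool" where
  "frag_from A s [] = True"
| "frag_from A s ((a, t) # xs) = ((s, a, t) \<in> steps A \<and> frag_from A t xs)"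

definition is_frag :: "('s, 'a) automaton \<Rightarrow> 's \<Rightarrow> ('a \<times> 's) list \<Rightarrow> bool" where
  "is_frag A s xs \<longleftrightarrow> s \<in> states A \<and> frag_from A s xs"

definition last_state :: "'s \<Rightarrow> ('a \<times> 's) list \<Rightarrow> 's" where
  "last_state s xs = last (s # map snd xs)"

definition trace_of :: "'a \<Rightarrow> ('a \<times> 's) list \<Rightarrow> 'a list" where
  "trace_of tau xs = filter (\<lambda>a. a \<noteq> tau) (map fst xs)"

definition reachable :: "('s, 'a) automaton \<Rightarrow> 's \<Rightarrow> bool" where
  "reachable A s \<longleftrightarrow>
     (\<exists>s0 xs. s0 \<in> start A \<and> is_frag A s0 xs \<and> last_state s0 xs = s)"

definition weak_step :: "'a \<Rightarrow> ('s, 'a) automaton \<Rightarrow> 's \<Rightarrow> 'a list \<Rightarrow> 's \<Rightarrow> bool" where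
  "weak_step tau A s \<beta> t \<longleftrightarrow>
     tau \<notin> set \<beta> \<and>
     (\<exists>xs. is_frag A s xs \<and> trace_of tau xs = \<beta> \<and> last_state s xs = t)"

definition deterministic :: "'a \<Rightarrow> ('s, 'a) automaton \<Rightarrow> bool" where
  "deterministic tau A \<longleftrightarrow>
     card (start A) = 1 \<and>
     (\<forall>s \<in> states A. \<forall>\<beta>. tau \<notin> set \<beta> \<longrightarrow>
        (\<forall>t1 t2. weak_step tau A s \<beta> t1 \<and> weak_step tau A s \<beta> t2 \<longrightarrow> t1 = t2))"

definition fin_invisible_nondet :: "'a \<Rightarrow> ('s, 'a) automaton \<Rightarrow> bool" where
  "fin_invisible_nondet tau A \<longleftrightarrow>
     finite (start A) \<and>
     (\<forall>s \<in> states A. \<forall>\<beta>. tau \<notin> set \<beta> \<longrightarrow> finite {t. weak_step tau A s \<beta> t})"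

definition step_refinement ::
  "'a \<Rightarrow> ('s1, 'a) automaton \<Rightarrow> ('s2, 'a) automaton \<Rightarrow> ('s1 \<Rightarrow> 's2 option) \<Rightarrow> bool" where
  "step_refinement tau A B r \<longleftrightarrow>
     (\<forall>s u. r s = Some u \<longrightarrow> s \<in> states A \<and> u \<in> states B) \<and>
     (\<forall>s \<in> start A. s \<in> dom r \<and> the (r s) \<in> start B) \<and>
     (\<forall>s a t. (s, a, t) \<in> steps A \<and> s \<in> dom r \<longrightarrow>
        t \<in> dom r \<and>
        ((the (r s) = the (r t) \<and> a = tau) \<or> (the (r s), a, the (r t)) \<in> steps B))"

definition leR :: "'a \<Rightarrow> ('s1, 'a) automaton \<Rightarrow> ('s2, 'a) automaton \<Rightarrow> bool" where
  "leR tau A B \<longleftrightarrow> (\<exists>r. step_refinement tau A B r)"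

text \<open>The domain steps(A) \<union> start(A) is encoded in the
  sum type (Inl for steps, Inr for start states); only arguments from that domain
  (and from states(B)) are constrained.\<close>
definition normed_bsim ::
  "'a \<Rightarrow> ('s1, 'a) automaton \<Rightarrow> ('s2, 'a) automaton \<Rightarrow> ('s1 \<times> 's2) set \<Rightarrow>
   (('s1 \<times> 'a \<times> 's1) + 's1 \<Rightarrow> 's2 \<Rightarrow> 'd) \<Rightarrow> ('d \<times> 'd) set \<Rightarrow> bool" where
  "normed_bsim tau A B b n lt \<longleftrightarrow>
     wf lt \<and> trans lt \<and>
     b \<subseteq> states A \<times> states B \<and>
     (\<forall>s \<in> states A. b `` {s} \<noteq> {}) \<and>
     (\<forall>s \<in> start A. \<forall>u \<in> b `` {s}.
        u \<in> start B \<or>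
        (\<exists>v \<in> b `` {s}. (v, tau, u) \<in> steps B \<and> (n (Inr s) v, n (Inr s) u) \<in> lt)) \<and>
     (\<forall>t a s. (t, a, s) \<in> steps A \<longrightarrow> (\<forall>u \<in> b `` {s}.
        (u \<in> b `` {t} \<and> a = tau) \<or>
        (\<exists>v \<in> b `` {t}. (v, a, u) \<in> steps B) \<or>
        (\<exists>v \<in> b `` {s}. (v, tau, u) \<in> steps B \<and>
            (n (Inl (t, a, s)) v, n (Inl (t, a, s)) u) \<in> lt)))"

text \<open>Since the norm only matters on its image, which has cardinality at most that of
  its domain, the existential over the set S may, without loss of generality, be taken
  over the type of the domain of n itself.\<close>
type_synonym ('s1, 'a, 's2) norm_val = "(('s1 \<times> 'a \<times> 's1) + 's1) \<times> 's2"

definition leB :: "'a \<Rightarrow> ('s1, 'a) automaton \<Rightarrow> ('s2, 'a) automaton \<Rightarrow> bool" where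
  "leB tau A B \<longleftrightarrow>
     (\<exists>b (n :: ('s1 \<times> 'a \<times> 's1) + 's1 \<Rightarrow> 's2 \<Rightarrow> ('s1, 'a, 's2) norm_val) lt.
        normed_bsim tau A B b n lt)"

definition leiB :: "'a \<Rightarrow> ('s1, 'a) automaton \<Rightarrow> ('s2, 'a) automaton \<Rightarrow> bool" where
  "leiB tau A B \<longleftrightarrow>
     (\<exists>b (n :: ('s1 \<times> 'a \<times> 's1) + 's1 \<Rightarrow> 's2 \<Rightarrow> ('s1, 'a, 's2) norm_val) lt.
        normed_bsim tau A B b n lt \<and> (\<forall>s. finite (b `` {s})))"

end

theory Submission
  imports Defs
begin

text \<open>If b is a normed backward simulation, every u in b[s] is reached in B, from a
  start state, by the trace of any execution of A ending in s: induct along the execution,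
  and within each step do a well-founded induction on the norm to absorb the tau-steps of B.
  If B is deterministic, a trace leads to at most one state, so the total relation b is a
  function on reachable states; its norm-decreasing alternatives would then compare the
  norm of a state with itself, so they never apply and b is a step refinement. If B has
  finite invisible nondeterminism, a trace leads to finitely many states, so b is
  image-finite once all states of A are reachable.\<close>

lemma wf_norm_descent:
  assumes "wf lt" and "u \<in> U"
    and descent: "\<And>u. u \<in> U \<Longrightarrow> Q u \<or> (\<exists>v \<in> U. R v u \<and> (N v, N u) \<in> lt)"
    and base: "\<And>u. u \<in> U \<Longrightarrow> Q u \<Longrightarrow> P u"
    and step: "\<And>v u. P v \<Longrightarrow> R v u \<Longrightarrow> P u"
  shows "P u"
  using wf_inv_image[OF \<open>wf lt\<close>, of N] \<open>u \<in> U\<close>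
proof (induction u rule: wf_induct_rule)
  case (less u)
  from descent[OF less.prems] show ?case
    using base[OF less.prems] less.IH step by (auto simp: inv_image_def)
qed

lemma frag_from_append:
  "frag_from A s (xs @ ys) \<longleftrightarrow> frag_from A s xs \<and> frag_from A (last_state s xs) ys"
  by (induction xs arbitrary: s) (auto simp: last_state_def)

lemma is_frag_snoc:
  "is_frag A s (xs @ [(a, t)]) \<longleftrightarrow> is_frag A s xs \<and> (last_state s xs, a, t) \<in> steps A"
  by (simp add: is_frag_def frag_from_append)

lemma last_state_snoc [simp]: "last_state s (xs @ [(a, t)]) = t"
  by (simp add: last_state_def)

lemma trace_of_snoc:
  "trace_of tau (xs @ [(a, t)]) = (if a = tau then trace_of tau xs else trace_of tau xs @ [a])"
  by (simp add: trace_of_def)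

lemma last_state_in_states:
  assumes "is_automaton tau A" and "is_frag A s xs"
  shows "last_state s xs \<in> states A"
  using assms(2)
proof (induction xs arbitrary: s)
  case Nil
  then show ?case by (simp add: is_frag_def last_state_def)
next
  case (Cons p xs)
  obtain a t where p: "p = (a, t)" by (cases p)
  with Cons.prems have "(s, a, t) \<in> steps A" and "frag_from A t xs"
    by (auto simp: is_frag_def)
  with assms(1) have "is_frag A t xs"
    by (auto simp: is_frag_def is_automaton_def)
  with Cons.IH p show ?case by (simp add: last_state_def)
qed

lemma reachable_in_states: "is_automaton tau A \<Longrightarrow> reachable A s \<Longrightarrow> s \<in> states A"
  unfolding reachable_def by (auto dest: last_state_in_states)

lemma reachable_start: "is_automaton tau A \<Longrightarrow> s \<in> start A \<Longrightarrow> reachable A s"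
  unfolding reachable_def is_automaton_def
  by (rule exI[of _ s], rule exI[of _ "[]"]) (auto simp: is_frag_def last_state_def)

lemma reachable_step: "reachable A s \<Longrightarrow> (s, a, t) \<in> steps A \<Longrightarrow> reachable A t"
  unfolding reachable_def by (metis is_frag_snoc last_state_snoc)

lemma weak_step_Nil: "u \<in> states B \<Longrightarrow> weak_step tau B u [] u"
  unfolding weak_step_def
  by (auto intro!: exI[of _ "[]"] simp: is_frag_def trace_of_def last_state_def)

lemma weak_step_snoc:
  assumes "weak_step tau B u0 \<beta> v" and "(v, a, u) \<in> steps B"
  shows "weak_step tau B u0 (if a = tau then \<beta> else \<beta> @ [a]) u"
proof -
  obtain xs where xs: "is_frag B u0 xs" "trace_of tau xs = \<beta>" "last_state u0 xs = v"
    and "tau \<notin> set \<beta>"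
    using assms(1) unfolding weak_step_def by blast
  with assms(2) have "is_frag B u0 (xs @ [(a, u)])"
    and "trace_of tau (xs @ [(a, u)]) = (if a = tau then \<beta> else \<beta> @ [a])"
    and "tau \<notin> set (if a = tau then \<beta> else \<beta> @ [a])"
    by (simp_all add: is_frag_snoc trace_of_snoc)
  then show ?thesis
    unfolding weak_step_def by (metis last_state_snoc)
qed

definition reached_by :: "'a \<Rightarrow> ('s, 'a) automaton \<Rightarrow> 'a list \<Rightarrow> 's set" where
  "reached_by tau B \<beta> = {u. \<exists>u0 \<in> start B. weak_step tau B u0 \<beta> u}"

lemma reached_by_tau_step:
  "v \<in> reached_by tau B \<beta> \<Longrightarrow> (v, tau, u) \<in> steps B \<Longrightarrow> u \<in> reached_by tau B \<beta>"
  unfolding reached_by_def by (fastforce dest: weak_step_snoc)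

lemma reached_by_step:
  "v \<in> reached_by tau B \<beta> \<Longrightarrow> (v, a, u) \<in> steps B \<Longrightarrow>
     u \<in> reached_by tau B (if a = tau then \<beta> else \<beta> @ [a])"
  unfolding reached_by_def by (fastforce dest: weak_step_snoc)

lemma deterministic_reached_by_unique:
  assumes "is_automaton tau B" and "deterministic tau B"
    and "u \<in> reached_by tau B \<beta>" and "v \<in> reached_by tau B \<beta>"
  shows "u = v"
proof -
  obtain u0 where "start B = {u0}"
    using assms(2) card_1_singletonE unfolding deterministic_def by blast
  with assms(3,4) have "weak_step tau B u0 \<beta> u" and "weak_step tau B u0 \<beta> v"
    by (auto simp: reached_by_def)
  moreover have "u0 \<in> states B"
    using assms(1) \<open>start B = {u0}\<close> by (auto simp: is_automaton_def)
  ultimately show ?thesis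
    using assms(2) unfolding deterministic_def weak_step_def by blast
qed

lemma fin_invisible_nondet_finite_reached_by:
  assumes "is_automaton tau B" and "fin_invisible_nondet tau B"
  shows "finite (reached_by tau B \<beta>)"
proof (cases "tau \<in> set \<beta>")
  case True
  then show ?thesis by (simp add: reached_by_def weak_step_def)
next
  case False
  have "reached_by tau B \<beta> = (\<Union>u0 \<in> start B. {u. weak_step tau B u0 \<beta> u})"
    by (auto simp: reached_by_def)
  moreover have "start B \<subseteq> states B"
    using assms(1) by (simp add: is_automaton_def)
  ultimately show ?thesis
    using assms(2) False unfolding fin_invisible_nondet_def by auto
qed

lemma normed_bsim_startD:
  assumes "normed_bsim tau A B b n lt" and "s \<in> start A" and "(s, u) \<in> b"
  shows "u \<in> start B \<or>
    (\<exists>v. (s, v) \<in> b \<and> (v, tau, u) \<in> steps B \<and> (n (Inr s) v, n (Inr s) u) \<in> lt)"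
  using assms unfolding normed_bsim_def by blast

lemma normed_bsim_stepD:
  assumes "normed_bsim tau A B b n lt" and "(t, a, s) \<in> steps A" and "(s, u) \<in> b"
  shows "((t, u) \<in> b \<and> a = tau) \<or> (\<exists>v. (t, v) \<in> b \<and> (v, a, u) \<in> steps B) \<or>
    (\<exists>v. (s, v) \<in> b \<and> (v, tau, u) \<in> steps B \<and>
       (n (Inl (t, a, s)) v, n (Inl (t, a, s)) u) \<in> lt)"
  using assms unfolding normed_bsim_def by blast

lemma normed_bsim_start_reached_by:
  assumes bs: "normed_bsim tau A B b n lt" and "s0 \<in> start A"
  shows "b `` {s0} \<subseteq> reached_by tau B []"
proof
  have wf: "wf lt" and b_states: "b \<subseteq> states A \<times> states B"
    using bs by (simp_all add: normed_bsim_def)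
  fix u assume "u \<in> b `` {s0}"
  with wf show "u \<in> reached_by tau B []"
  proof (rule wf_norm_descent[where N = "n (Inr s0)" and Q = "\<lambda>u. u \<in> start B"
        and R = "\<lambda>v u. (v, tau, u) \<in> steps B"])
    fix u assume "u \<in> b `` {s0}"
    then show "u \<in> start B \<or> (\<exists>v \<in> b `` {s0}. (v, tau, u) \<in> steps B \<and>
        (n (Inr s0) v, n (Inr s0) u) \<in> lt)"
      using normed_bsim_startD[OF bs \<open>s0 \<in> start A\<close>] by blast
  next
    fix u assume "u \<in> b `` {s0}" and "u \<in> start B"
    with b_states show "u \<in> reached_by tau B []"
      unfolding reached_by_def by (blast intro: weak_step_Nil)
  qed (rule reached_by_tau_step)
qed

lemma normed_bsim_step_reached_by:
  assumes bs: "normed_bsim tau A B b n lt" and step: "(t, a, s) \<in> steps A"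
    and pre: "b `` {t} \<subseteq> reached_by tau B \<beta>"
  shows "b `` {s} \<subseteq> reached_by tau B (if a = tau then \<beta> else \<beta> @ [a])"
proof
  have wf: "wf lt" using bs by (simp add: normed_bsim_def)
  fix u assume "u \<in> b `` {s}"
  with wf show "u \<in> reached_by tau B (if a = tau then \<beta> else \<beta> @ [a])"
  proof (rule wf_norm_descent[where N = "n (Inl (t, a, s))"
        and Q = "\<lambda>u. ((t, u) \<in> b \<and> a = tau) \<or> (\<exists>v. (t, v) \<in> b \<and> (v, a, u) \<in> steps B)"
        and R = "\<lambda>v u. (v, tau, u) \<in> steps B"])
    fix u assume "u \<in> b `` {s}"
    then show "(((t, u) \<in> b \<and> a = tau) \<or> (\<exists>v. (t, v) \<in> b \<and> (v, a, u) \<in> steps B)) \<or>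
        (\<exists>v \<in> b `` {s}. (v, tau, u) \<in> steps B \<and>
          (n (Inl (t, a, s)) v, n (Inl (t, a, s)) u) \<in> lt)"
      using normed_bsim_stepD[OF bs step] by blast
  next
    fix u assume "((t, u) \<in> b \<and> a = tau) \<or> (\<exists>v. (t, v) \<in> b \<and> (v, a, u) \<in> steps B)"
    then show "u \<in> reached_by tau B (if a = tau then \<beta> else \<beta> @ [a])"
      using pre reached_by_step[of _ tau B \<beta> a u] by auto
  qed (rule reached_by_tau_step)
qed

lemma normed_bsim_sound:
  assumes bs: "normed_bsim tau A B b n lt"
    and "s0 \<in> start A" and "is_frag A s0 xs"
  shows "b `` {last_state s0 xs} \<subseteq> reached_by tau B (trace_of tau xs)"
  using \<open>is_frag A s0 xs\<close>
proof (induction xs rule: rev_induct)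
  case Nil
  with normed_bsim_start_reached_by[OF bs \<open>s0 \<in> start A\<close>] show ?case
    by (simp add: last_state_def trace_of_def)
next
  case (snoc p xs)
  obtain a s where p: "p = (a, s)" by (cases p)
  with snoc.prems have "is_frag A s0 xs" and "(last_state s0 xs, a, s) \<in> steps A"
    by (simp_all add: is_frag_snoc)
  with snoc.IH normed_bsim_step_reached_by[OF bs] show ?case
    by (simp add: p trace_of_snoc)
qed

lemma normed_bsim_image_reached_by:
  assumes "normed_bsim tau A B b n lt" and "reachable A s"
  obtains \<beta> where "b `` {s} \<subseteq> reached_by tau B \<beta>"
  using assms normed_bsim_sound unfolding reachable_def by metis

lemma normed_bsim_functional_step_refinement:
  assumes A: "is_automaton tau A" and bs: "normed_bsim tau A B b n lt"
    and functional: "\<And>s u. reachable A s \<Longrightarrow> (s, u) \<in> b \<longleftrightarrow> u = f s"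
  shows "step_refinement tau A B (\<lambda>s. if reachable A s then Some (f s) else None)"
    (is "step_refinement tau A B ?r")
proof -
  have wf: "wf lt" and b_states: "b \<subseteq> states A \<times> states B"
    using bs by (simp_all add: normed_bsim_def)
  have no_descent: "(n x (f s), n x (f s)) \<notin> lt" for x s
    using wf_not_refl[OF wf] by blast
  show ?thesis
    unfolding step_refinement_def
  proof (intro conjI allI ballI impI)
    fix s u assume "?r s = Some u"
    then have "reachable A s" and "u = f s" by (auto split: if_splits)
    then show "s \<in> states A" and "u \<in> states B"
      using functional b_states by blast+
  next
    fix s assume s: "s \<in> start A"
    with A have reach: "reachable A s" by (rule reachable_start)
    then show "s \<in> dom ?r" by auto
    from reach have "(s, f s) \<in> b" by (simp add: functional)
    from normed_bsim_startD[OF bs s this] show "the (?r s) \<in> start B"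
      using reach no_descent by (auto simp: functional[OF reach])
  next
    fix s a t assume "(s, a, t) \<in> steps A \<and> s \<in> dom ?r"
    then have step: "(s, a, t) \<in> steps A" and reach_s: "reachable A s"
      by (auto split: if_splits)
    from reach_s step have reach_t: "reachable A t" by (rule reachable_step)
    then show "t \<in> dom ?r" by auto
    from reach_t have "(t, f t) \<in> b" by (simp add: functional)
    from normed_bsim_stepD[OF bs step this]
    show "the (?r s) = the (?r t) \<and> a = tau \<or> (the (?r s), a, the (?r t)) \<in> steps B"
      using reach_s reach_t no_descent
      by (auto simp: functional[OF reach_s] functional[OF reach_t])
  qed
qed

lemma normed_bsim_deterministic_functional:
  assumes A: "is_automaton tau A" and B: "is_automaton tau B" and det: "deterministic tau B"
    and bs: "normed_bsim tau A B b n lt" and reach: "reachable A s"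
  shows "\<exists>!u. (s, u) \<in> b"
proof -
  have "b `` {s} \<noteq> {}"
    using bs reachable_in_states[OF A reach] by (simp add: normed_bsim_def)
  moreover obtain \<beta> where "b `` {s} \<subseteq> reached_by tau B \<beta>"
    using normed_bsim_image_reached_by[OF bs reach] by blast
  ultimately show ?thesis
    using deterministic_reached_by_unique[OF B det] by blast
qed

lemma normed_bsim_finite_Image:
  assumes B: "is_automaton tau B" and fin: "fin_invisible_nondet tau B"
    and bs: "normed_bsim tau A B b n lt" and reach: "\<forall>s \<in> states A. reachable A s"
  shows "finite (b `` {s})"
proof (cases "s \<in> states A")
  case True
  then obtain \<beta> where "b `` {s} \<subseteq> reached_by tau B \<beta>"
    using normed_bsim_image_reached_by[OF bs] reach by blast
  then show ?thesis
    using fin_invisible_nondet_finite_reached_by[OF B fin] finite_subset by blast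
next
  case False
  with bs have "b `` {s} = {}" unfolding normed_bsim_def by blast
  then show ?thesis by simp
qed

theorem mainTheorem10:
  fixes tau :: 'a and A :: "('s1, 'a) automaton" and B :: "('s2, 'a) automaton"
  assumes "is_automaton tau A" and "is_automaton tau B"
  shows "(deterministic tau B \<and> leB tau A B \<longrightarrow> leR tau A B) \<and>
         ((\<forall>s \<in> states A. reachable A s) \<and> fin_invisible_nondet tau B \<and> leB tau A B
            \<longrightarrow> leiB tau A B)"
proof (intro conjI impI; elim conjE)
  assume det: "deterministic tau B" and "leB tau A B"
  then obtain b and n :: "('s1 \<times> 'a \<times> 's1) + 's1 \<Rightarrow> 's2 \<Rightarrow> ('s1, 'a, 's2) norm_val" and lt
    where bs: "normed_bsim tau A B b n lt"
    unfolding leB_def by blast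
  have "(s, u) \<in> b \<longleftrightarrow> u = (THE u. (s, u) \<in> b)" if "reachable A s" for s u
    using normed_bsim_deterministic_functional[OF assms det bs that] by (metis the_equality)
  then have "step_refinement tau A B (\<lambda>s. if reachable A s then Some (THE u. (s, u) \<in> b) else None)"
    by (rule normed_bsim_functional_step_refinement[OF assms(1) bs])
  then show "leR tau A B" unfolding leR_def by blast
next
  assume reach: "\<forall>s \<in> states A. reachable A s" and fin: "fin_invisible_nondet tau B"
    and "leB tau A B"
  then obtain b and n :: "('s1 \<times> 'a \<times> 's1) + 's1 \<Rightarrow> 's2 \<Rightarrow> ('s1, 'a, 's2) norm_val" and lt
    where bs: "normed_bsim tau A B b n lt"
    unfolding leB_def by blast
  with normed_bsim_finite_Image[OF assms(2) fin bs reach] show "leiB tau A B"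
    unfolding leiB_def by blast
qed

end
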